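(* Let $X$ be an $n$-dimensional projective space over a field, $-1\le t\le s\le n$, and let $K$ be a $k$-dimensional subspace of $X$ with $-1\le k\le n-s-1$. For every integer $-1\le d\le\min\{k,s\}$, suppose integers $t_1(d),s_1(d),t_2(d),s_2(d)$ satisfy $-1\le t_1(d)\le s_1(d)=d$, $-1\le t_2(d)\le s_2(d)$, $t_1(d)+t_2(d)+1=t$ and $s_1(d)+s_2(d)+1=s$, and choose a set $\mathcal B_K(d)\subseteq\mathrm{Gr}_{t_1(d)}(K)$ blocking $\mathrm{Gr}_{s_1(d)}(K)$ and a set $\mathcal B_{X/K}(d)\subseteq\mathrm{Gr}_{t_2(d)}(X/K)$ blocking $\mathrm{Gr}_{s_2(d)}(X/K)$. Then $\mathcal B:=\bigcup_{d=-1}^{\min\{k,s\}}\mathcal B(d)$ is an $(s,t)$-blocking set in $X$, where $$\mathcal B(d):=\{T\in\mathrm{Gr}_t(X): K\cap T\in\mathcal B_K(d),\ \langle K,T\rangle\in\mathcal B_{X/K}(d)\}.$$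
   Context: Projective dimension is used (empty subspace has dimension $-1$); $\mathrm{Gr}_d(Y)$ is the set of $d$-dimensional subspaces of $Y$. For a $k$-dimensional subspace $K$ of $X$, the quotient space $X/K$ is the projective space of dimension $\dim X-k-1$ whose $r$-dimensional subspaces are the $(r+k+1)$-dimensional subspaces of $X$ containing $K$; the span $\langle K,T\rangle$ is regarded as an element of $X/K$. A set $\mathcal B$ of $t$-dimensional subspaces blocks a set $\mathcal S$ of $s$-dimensional subspaces if every member of $\mathcal S$ contains a member of $\mathcal B$; an $(s,t)$-blocking set in $X$ is a subset of $\mathrm{Gr}_t(X)$ blocking $\mathrm{Gr}_s(X)$. *)

theory Defs
  imports "HOL-Analysis.Analysis"
begin

text \<open>The projective space X = PG(n,F) is modelled as the lattice of linear subspaces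
of the vector space F^(n+1) = 'a^'n (with CARD('n) = n+1). A projective subspace is a
linear subspace; its projective dimension is its vector dimension minus 1 (so the
zero subspace, i.e. the empty projective subspace, has dimension -1).\<close>

definition pdim :: "('a::field ^ 'n) set \<Rightarrow> int" where
  "pdim S = int (vec.dim S) - 1"

definition Gr :: "int \<Rightarrow> ('a::field ^ 'n) set \<Rightarrow> ('a ^ 'n) set set" where
  "Gr d Y = {U. vec.subspace U \<and> U \<subseteq> Y \<and> pdim U = d}"

text \<open>Gr_r(X/K): the r-dimensional subspaces of the quotient space X/K, i.e. the
(r+k+1)-dimensional subspaces of X containing K, where k = pdim K.\<close>
definition GrQ :: "int \<Rightarrow> ('a::field ^ 'n) set \<Rightarrow> ('a ^ 'n) set set" where
  "GrQ r K = {U. vec.subspace U \<and> K \<subseteq> U \<and> pdim U = r + pdim K + 1}"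

definition blocks :: "'v set set \<Rightarrow> 'v set set \<Rightarrow> bool" where
  "blocks B S \<longleftrightarrow> (\<forall>S'\<in>S. \<exists>T\<in>B. T \<subseteq> S')"

definition blocking_set :: "int \<Rightarrow> int \<Rightarrow> ('a::field ^ 'n) set set \<Rightarrow> bool" where
  "blocking_set s t B \<longleftrightarrow> B \<subseteq> Gr t UNIV \<and> blocks B (Gr s UNIV)"

definition join :: "('a::field ^ 'n) set \<Rightarrow> ('a ^ 'n) set \<Rightarrow> ('a ^ 'n) set" where
  "join K T = vec.span (K \<union> T)"

end

theory Submission
  imports Defs
begin

text \<open>Let S be an s-dimensional subspace and d the dimension of K \<inter> S. Then K \<inter> S contains
some T1 \<in> B_K(d), and \<langle>K,S\<rangle>, which has dimension s2(d) + k + 1 by the Grassmann formula,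
contains some Q \<in> B_{X/K}(d). Take a complement W of K \<inter> S inside Q \<inter> S and put
T = \<langle>T1,W\<rangle> \<subseteq> S. Because W meets K trivially, the modular law gives K \<inter> T = T1 and
\<langle>K,T\<rangle> = \<langle>K,W\<rangle> = \<langle>K,Q \<inter> S\<rangle> = Q, and counting dimensions shows that T is a t-space,
so T \<in> B(d).\<close>

context vector_space
begin

lemma span_Un_subspaces:
  assumes "subspace A" "subspace B"
  shows "span (A \<union> B) = {x + y |x y. x \<in> A \<and> y \<in> B}"
proof -
  have "span A = A" "span B = B" using assms by (simp_all only: span_eq_iff)
  then show ?thesis unfolding span_Un by (simp only:)
qed

lemma span_Un_span: "span (A \<union> span B) = span (A \<union> B)"
  by (simp only: span_Un span_span)

lemma Int_span_Un_subspaces: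
  assumes "subspace A" "subspace B" "subspace C" "A \<subseteq> C"
  shows "C \<inter> span (A \<union> B) = span (A \<union> (C \<inter> B))"
proof (rule subset_antisym)
  show "C \<inter> span (A \<union> B) \<subseteq> span (A \<union> (C \<inter> B))"
  proof
    fix x assume x: "x \<in> C \<inter> span (A \<union> B)"
    then obtain a b where ab: "x = a + b" "a \<in> A" "b \<in> B"
      using span_Un_subspaces[OF assms(1,2)] by blast
    then have "b = x - a" by simp
    then have "b \<in> C \<inter> B"
      using x ab assms(3,4) subspace_diff by blast
    then show "x \<in> span (A \<union> (C \<inter> B))"
      using ab by (simp add: span_add span_base)
  qed
  have "span (A \<union> (C \<inter> B)) \<subseteq> C" using assms(3,4) by (simp add: span_minimal)
  moreover have "span (A \<union> (C \<inter> B)) \<subseteq> span (A \<union> B)" by (rule span_mono) blast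
  ultimately show "span (A \<union> (C \<inter> B)) \<subseteq> C \<inter> span (A \<union> B)" by blast
qed

end

context finite_dimensional_vector_space
begin

lemma dim_span_Un_Int:
  assumes "subspace A" "subspace B"
  shows "dim (span (A \<union> B)) + dim (A \<inter> B) = dim A + dim B"
  using dim_sums_Int[OF assms] span_Un_subspaces[OF assms] by simp

lemma subspace_complement_exists:
  assumes "subspace A" "subspace V" "A \<subseteq> V"
  obtains W where "subspace W" "W \<subseteq> V" "span (A \<union> W) = V" "A \<inter> W \<subseteq> {0}"
proof -
  obtain B where B: "B \<subseteq> A" "A \<subseteq> span B" "independent B" "card B = dim A"
    using basis_exists by metis
  obtain C where C: "B \<subseteq> C" "C \<subseteq> V" "independent C" "V \<subseteq> span C"
    using maximal_independent_subset_extend[of B V] B assms(3) by blast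
  define W where "W = span (C - B)"
  have "finite C" using C(3) finiteI_independent by blast
  have span_B: "span B = A" using B assms(1) by (simp add: span_subspace)
  have span_C: "span C = V" using C assms(2) by (simp add: span_subspace)
  have dim_W: "dim W = card (C - B)"
    unfolding W_def by (rule dim_span_eq_card_independent, rule independent_mono[OF C(3)]) blast
  have "span (A \<union> W) = span (B \<union> (C - B))"
    unfolding W_def span_B[symmetric] by (simp only: span_Un span_span)
  also have "B \<union> (C - B) = C" using C(1) by blast
  finally have span_AW: "span (A \<union> W) = V" using span_C by simp
  have "dim V + dim (A \<inter> W) = dim A + dim W"
    using dim_span_Un_Int[OF assms(1) subspace_span, of "C - B"]
    by (simp only: W_def[symmetric] span_AW)
  moreover have "dim V = card C"
    using span_C C(3) dim_span_eq_card_independent by metis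
  moreover have "card (C - B) + card B = card C"
    using C(1) \<open>finite C\<close> by (simp add: card_Diff_subset finite_subset card_mono)
  ultimately have "dim (A \<inter> W) = 0" using B(4) dim_W by linarith
  moreover have "W \<subseteq> V"
    unfolding W_def using C(2) assms(2) by (meson Diff_subset order_trans span_minimal)
  ultimately show ?thesis
    using that[of W] span_AW by (simp add: W_def)
qed

lemma exists_subspace_Int_span_Un:
  assumes K: "subspace K" and S: "subspace S" and T1: "subspace T1" "T1 \<subseteq> K \<inter> S"
    and Q: "subspace Q" "K \<subseteq> Q" "Q \<subseteq> span (K \<union> S)"
  obtains T where "subspace T" "T \<subseteq> S" "K \<inter> T = T1" "span (K \<union> T) = Q"
    "dim T + dim K = dim T1 + dim Q"
proof -
  have "K \<inter> S \<subseteq> Q \<inter> S" using Q(2) by blast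
  then obtain W where W: "subspace W" "W \<subseteq> Q \<inter> S" "span ((K \<inter> S) \<union> W) = Q \<inter> S"
    "(K \<inter> S) \<inter> W \<subseteq> {0}"
    using subspace_complement_exists K S Q(1) by (metis subspace_inter)
  have KW: "K \<inter> W = {0}"
    using W(1,2,4) K by (auto simp: subspace_0)
  define T where "T = span (T1 \<union> W)"
  have "K \<inter> T = span (T1 \<union> (K \<inter> W))"
    unfolding T_def using T1 W(1) K by (simp add: Int_span_Un_subspaces)
  then have KT: "K \<inter> T = T1" using KW T1(1) by simp
  have "Q = Q \<inter> span (K \<union> S)" using Q(3) by blast
  also have "\<dots> = span (K \<union> (Q \<inter> S))" using K S Q by (simp add: Int_span_Un_subspaces)
  also have "\<dots> = span (K \<union> ((K \<inter> S) \<union> W))" by (simp only: W(3)[symmetric] span_Un_span)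
  also have "K \<union> ((K \<inter> S) \<union> W) = K \<union> W" by blast
  finally have KW_Q: "span (K \<union> W) = Q" by simp
  have "K \<union> (T1 \<union> W) = K \<union> W" using T1(2) by blast
  then have KT_Q: "span (K \<union> T) = Q" unfolding T_def span_Un_span using KW_Q by simp
  have "dim T + dim (T1 \<inter> W) = dim T1 + dim W"
    unfolding T_def using T1(1) W(1) by (rule dim_span_Un_Int)
  moreover have "T1 \<inter> W = {0}" using KW T1 W(1) by (auto simp: subspace_0)
  moreover have "dim Q + dim (K \<inter> W) = dim K + dim W"
    using dim_span_Un_Int[OF K W(1)] KW_Q by simp
  ultimately have "dim T + dim K = dim T1 + dim Q" using KW by simp
  moreover have "T \<subseteq> S" unfolding T_def using T1(2) W(2) S by (intro span_minimal) auto
  moreover have "subspace T" unfolding T_def by (rule subspace_span)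
  ultimately show ?thesis using that KT KT_Q by blast
qed

end

lemma pdim_join_Int:
  fixes A B :: "('a::field ^ 'n) set"
  assumes "vec.subspace A" "vec.subspace B"
  shows "pdim (join A B) + pdim (A \<inter> B) = pdim A + pdim B"
  using vec.dim_span_Un_Int[OF assms] by (simp add: pdim_def join_def)

theorem corollary3p7:
  fixes n t s k :: int
    and K :: "('a::field ^ 'n) set"
    and t1 s1 t2 s2 :: "int \<Rightarrow> int"
    and BK BQ :: "int \<Rightarrow> ('a ^ 'n) set set"
  assumes n_def: "n = int CARD('n) - 1"
    and "-1 \<le> t" and "t \<le> s" and "s \<le> n"
    and K_sub: "vec.subspace K" and K_dim: "pdim K = k"
    and "-1 \<le> k" and "k \<le> n - s - 1"
    and params: "\<And>d. -1 \<le> d \<Longrightarrow> d \<le> min k s \<Longrightarrow>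
        -1 \<le> t1 d \<and> t1 d \<le> s1 d \<and> s1 d = d \<and> -1 \<le> t2 d \<and> t2 d \<le> s2 d
        \<and> t1 d + t2 d + 1 = t \<and> s1 d + s2 d + 1 = s"
    and BK: "\<And>d. -1 \<le> d \<Longrightarrow> d \<le> min k s \<Longrightarrow>
        BK d \<subseteq> Gr (t1 d) K \<and> blocks (BK d) (Gr (s1 d) K)"
    and BQ: "\<And>d. -1 \<le> d \<Longrightarrow> d \<le> min k s \<Longrightarrow>
        BQ d \<subseteq> GrQ (t2 d) K \<and> blocks (BQ d) (GrQ (s2 d) K)"
  shows "blocking_set s t
           (\<Union>d\<in>{-1..min k s}. {T \<in> Gr t UNIV. K \<inter> T \<in> BK d \<and> join K T \<in> BQ d})"
  unfolding blocking_set_def blocks_def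
proof (intro conjI ballI)
  fix S :: "('a ^ 'n) set"
  assume "S \<in> Gr s UNIV"
  then have S: "vec.subspace S" "pdim S = s" by (auto simp: Gr_def)
  define d where "d = pdim (K \<inter> S)"
  have "vec.dim (K \<inter> S) \<le> vec.dim K" "vec.dim (K \<inter> S) \<le> vec.dim S"
    by (auto intro: vec.dim_subset)
  then have d: "-1 \<le> d" "d \<le> min k s" using K_dim S(2) by (auto simp: d_def pdim_def)
  note params = params[OF d] and BK = BK[OF d] and BQ = BQ[OF d]
  have "K \<inter> S \<in> Gr (s1 d) K"
    using params vec.subspace_inter[OF K_sub S(1)] by (auto simp: Gr_def d_def)
  then obtain T1 where T1: "T1 \<in> BK d" "T1 \<subseteq> K \<inter> S"
    using BK by (auto simp: blocks_def)
  then have T1_Gr: "vec.subspace T1" "pdim T1 = t1 d" using BK by (auto simp: Gr_def)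
  have "join K S \<in> GrQ (s2 d) K"
    using pdim_join_Int[OF K_sub S(1)] params K_sub S
    by (auto simp: GrQ_def join_def d_def intro: vec.span_base)
  then obtain Q where Q: "Q \<in> BQ d" "Q \<subseteq> join K S"
    using BQ by (auto simp: blocks_def)
  then have Q_GrQ: "vec.subspace Q" "K \<subseteq> Q" "pdim Q = t2 d + k + 1"
    using BQ K_dim by (auto simp: GrQ_def)
  obtain T where T: "vec.subspace T" "T \<subseteq> S" "K \<inter> T = T1" "join K T = Q"
      "vec.dim T + vec.dim K = vec.dim T1 + vec.dim Q"
    using vec.exists_subspace_Int_span_Un[OF K_sub S(1) T1_Gr(1) T1(2) Q_GrQ(1,2)] Q(2)
    unfolding join_def by metis
  have "pdim T = t" using T(5) T1_Gr(2) Q_GrQ(3) K_dim params by (simp add: pdim_def)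
  then show "\<exists>T\<in>\<Union>d\<in>{-1..min k s}. {T \<in> Gr t UNIV. K \<inter> T \<in> BK d \<and> join K T \<in> BQ d}.
      T \<subseteq> S"
    using T T1(1) Q(1) d by (auto simp: Gr_def)
qed auto

end
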